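(* Let $(X,d)$ be a complete metric space and let $T:X\to \mathcal{CB}(X)$ be a multi-valued mapping such that \[ \mathcal{H}(Tx,Ty)\leq \eta(d(x,y)) \] for all $x,y\in X$, where $\eta:[0,\infty)\to[0,\infty)$ is a lower semicontinuous map such that $\eta(t)<t$ for all $t\in(0,+\infty)$ and $t\mapsto\frac{\eta(t)}{t}$ is non-decreasing on $(0,+\infty)$. Then $T$ has a fixed point, i.e., there exists $v\in X$ with $v\in Tv$.
   Context: $\mathcal{CB}(X)$ denotes the family of all nonempty closed and bounded subsets of $X$, and $\mathcal{H}$ is the Hausdorff metric on $\mathcal{CB}(X)$ induced by $d$: $\mathcal{H}(A,B)=\max\{\sup_{x\in B}d(x,A),\ \sup_{x\in A}d(x,B)\}$. *)

theory Defs
  imports "HOL-Analysis.Analysis"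
begin

text \<open>Hausdorff metric on nonempty closed bounded subsets, as in the paper:
  H(A,B) = max (sup_{x in B} d(x,A)) (sup_{x in A} d(x,B)).
  For nonempty bounded sets both suprema are finite reals.\<close>
definition hausdorff_metric :: "'a::metric_space set \<Rightarrow> 'a set \<Rightarrow> real" where
  "hausdorff_metric A B = max (SUP x\<in>B. infdist x A) (SUP x\<in>A. infdist x B)"

definition lsc_on_nonneg :: "(real \<Rightarrow> real) \<Rightarrow> bool" where
  "lsc_on_nonneg \<eta> \<longleftrightarrow> (\<forall>t\<ge>0. \<forall>e>0. \<exists>\<delta>>0. \<forall>s\<ge>0. \<bar>s - t\<bar> < \<delta> \<longrightarrow> \<eta> t - e < \<eta> s)"

end

theory Submission
  imports Defs
begin

text \<open>Fix \<open>x\<^sub>1 \<in> T x\<^sub>0\<close> and put \<open>R = d(x\<^sub>0, x\<^sub>1)\<close>. Monotonicity of \<open>\<eta>(t)/t\<close> gives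
  \<open>\<eta>(t) \<le> k t\<close> on \<open>(0, R]\<close> with \<open>k = \<eta>(R)/R < 1\<close>, so on that scale \<open>T\<close> is a genuine
  contraction. If \<open>T\<close> had no fixed point, one could choose \<open>x\<^sub>n\<^sub>+\<^sub>1 \<in> T x\<^sub>n\<close> with steps
  shrinking geometrically (they stay below \<open>R\<close>); the resulting Cauchy sequence converges
  to some \<open>v\<close>, and since \<open>\<eta>(t) < t\<close> the distance from \<open>x\<^sub>n\<^sub>+\<^sub>1\<close> to the closed set \<open>T v\<close> is
  at most \<open>d(x\<^sub>n, v) \<rightarrow> 0\<close>, whence \<open>v \<in> T v\<close>.\<close>

lemma dist_le_sum_dist_Suc:
  fixes z :: "nat \<Rightarrow> 'a::metric_space"
  shows "dist (z m) (z (m + k)) \<le> (\<Sum>i<k. dist (z (m + i)) (z (Suc (m + i))))"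
proof (induction k)
  case 0
  then show ?case by simp
next
  case (Suc k)
  have "dist (z m) (z (m + Suc k)) \<le> dist (z m) (z (m + k)) + dist (z (m + k)) (z (Suc (m + k)))"
    by (simp add: dist_triangle)
  with Suc show ?case by simp
qed

lemma dist_le_geometric_tail:
  fixes z :: "nat \<Rightarrow> 'a::metric_space"
  assumes "0 \<le> q" "q < 1" and steps: "\<And>n. dist (z n) (z (Suc n)) \<le> C * q ^ n"
  shows "dist (z m) (z (m + k)) \<le> C * q ^ m / (1 - q)"
proof -
  have "C \<ge> 0"
    using steps[of 0] zero_le_dist[of "z 0" "z (Suc 0)"] by (simp del: zero_le_dist)
  have "(\<Sum>i<k. dist (z (m + i)) (z (Suc (m + i)))) \<le> (\<Sum>i<k. C * q ^ m * q ^ i)"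
    by (rule sum_mono) (metis steps power_add mult.assoc)
  also have "\<dots> = C * q ^ m * (\<Sum>i<k. q ^ i)"
    by (simp add: sum_distrib_left)
  also have "(\<Sum>i<k. q ^ i) = (1 - q ^ k) / (1 - q)"
    using assms by (simp add: sum_gp_strict)
  also have "C * q ^ m * ((1 - q ^ k) / (1 - q)) \<le> C * q ^ m * (1 / (1 - q))"
    using assms \<open>C \<ge> 0\<close> by (intro mult_left_mono divide_right_mono) auto
  finally show ?thesis
    using dist_le_sum_dist_Suc[of z m k] by simp
qed

lemma Cauchy_if_dist_Suc_le_geometric:
  fixes z :: "nat \<Rightarrow> 'a::metric_space"
  assumes q: "0 \<le> q" "q < 1" and steps: "\<And>n. dist (z n) (z (Suc n)) \<le> C * q ^ n"
  shows "Cauchy z"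
proof (rule Cauchy_altdef2[THEN iffD2], intro allI impI)
  fix e :: real
  assume "0 < e"
  have "(\<lambda>n. C * q ^ n / (1 - q)) \<longlonglongrightarrow> C * 0 / (1 - q)"
    using q by (intro tendsto_intros LIMSEQ_power_zero) auto
  then have "eventually (\<lambda>n. C * q ^ n / (1 - q) < e) sequentially"
    using \<open>0 < e\<close> by (simp add: order_tendstoD(2))
  then obtain N where N: "\<And>n. n \<ge> N \<Longrightarrow> C * q ^ n / (1 - q) < e"
    by (auto simp: eventually_sequentially)
  have "dist (z n) (z N) < e" if "n \<ge> N" for n
    using dist_le_geometric_tail[OF q steps, of N "n - N"] N[of N] that
    by (simp add: dist_commute)
  then show "\<exists>N. \<forall>n\<ge>N. dist (z n) (z N) < e"
    by blast
qed

lemma infdist_le_hausdorff_metric: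
  fixes A B :: "'a::metric_space set"
  assumes "y \<in> A" "bounded A" "B \<noteq> {}"
  shows "infdist y B \<le> hausdorff_metric A B"
proof -
  obtain b where "b \<in> B"
    using assms(3) by blast
  obtain e where e: "\<forall>x\<in>A. dist b x \<le> e"
    using assms(2) bounded_any_center[of A b] by blast
  have "infdist x B \<le> e" if "x \<in> A" for x
    using infdist_le[OF \<open>b \<in> B\<close>, of x] e that dist_commute[of b x] by fastforce
  then have "bdd_above ((\<lambda>x. infdist x B) ` A)"
    by (rule bdd_aboveI2)
  then have "infdist y B \<le> (SUP x\<in>A. infdist x B)"
    using assms(1) by (rule cSUP_upper2) simp
  then show ?thesis
    unfolding hausdorff_metric_def by simp
qed

lemma infdist_less_imp_ex_dist_less:
  fixes A :: "'a::metric_space set"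
  assumes "A \<noteq> {}" "infdist y A < e"
  obtains a where "a \<in> A" "dist y a < e"
proof -
  have "(INF a\<in>A. dist y a) < e"
    using assms by (simp add: infdist_notempty)
  moreover have "bdd_below ((\<lambda>a. dist y a) ` A)"
    by (rule bdd_belowI2[where m = 0]) simp
  ultimately show ?thesis
    using that cINF_less_iff[OF assms(1)] by blast
qed

lemma limit_of_orbit_is_fixed_point:
  fixes T :: "'a::metric_space \<Rightarrow> 'a set"
  assumes CB: "\<And>x. T x \<noteq> {} \<and> bounded (T x)" and "closed (T v)"
    \<comment> \<open>Only for \<open>x \<noteq> v\<close>: the hypotheses of the theorem say nothing about \<open>\<eta> 0\<close>.\<close>
    and nonexpansive: "\<And>x. x \<noteq> v \<Longrightarrow> hausdorff_metric (T x) (T v) \<le> dist x v"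
    and orbit: "\<And>n. z (Suc n) \<in> T (z n)" and lim: "z \<longlonglongrightarrow> v"
  shows "v \<in> T v"
proof -
  have bound: "infdist (z (Suc n)) (T v) \<le> dist (z n) v" for n
  proof (cases "z n = v")
    case True
    then show ?thesis
      using orbit[of n] by simp
  next
    case False
    have "infdist (z (Suc n)) (T v) \<le> hausdorff_metric (T (z n)) (T v)"
      using infdist_le_hausdorff_metric[OF orbit[of n]] CB by blast
    with nonexpansive[OF False] show ?thesis
      by linarith
  qed
  have lim_infdist: "(\<lambda>n. infdist (z (Suc n)) (T v)) \<longlonglongrightarrow> infdist v (T v)"
    using LIMSEQ_Suc[OF lim] by (intro tendsto_infdist)
  have lim_dist: "(\<lambda>n. dist (z n) v) \<longlonglongrightarrow> 0"
    using lim tendsto_dist_iff by blast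
  have "infdist v (T v) \<le> 0"
    using tendsto_le[OF trivial_limit_sequentially lim_dist lim_infdist] bound by simp
  then have "infdist v (T v) = 0"
    using infdist_nonneg[of v "T v"] by (rule antisym)
  then show ?thesis
    using in_closed_iff_infdist_zero[OF \<open>closed (T v)\<close>] CB by blast
qed

lemma geometric_orbit_if_fixed_point_free:
  fixes T :: "'a::metric_space \<Rightarrow> 'a set" and \<eta> :: "real \<Rightarrow> real"
  assumes CB: "\<And>x. T x \<noteq> {} \<and> bounded (T x)"
    and eta_less: "\<And>t. t > 0 \<Longrightarrow> \<eta> t < t"
    and eta_mono: "\<And>s t. 0 < s \<Longrightarrow> s \<le> t \<Longrightarrow> \<eta> s / s \<le> \<eta> t / t"
    and contr: "\<And>x y. hausdorff_metric (T x) (T y) \<le> \<eta> (dist x y)"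
    and fixed_point_free: "\<And>v. v \<notin> T v"
  obtains q z C where "0 \<le> q" "q < 1"
    "\<And>n. z (Suc n) \<in> T (z n)" "\<And>n. dist (z n) (z (Suc n)) \<le> C * q ^ n"
proof -
  obtain x0 x1 where x1: "x1 \<in> T x0"
    using CB by blast
  define R where "R = dist x0 x1"
  have "R > 0"
    unfolding R_def using x1 fixed_point_free by (metis zero_less_dist_iff)
  define k where "k = \<eta> R / R"
  define q where "q = (1 + max k 0) / 2"
  have "k < 1"
    using eta_less[OF \<open>R > 0\<close>] \<open>R > 0\<close> by (simp add: k_def)
  then have q: "0 \<le> q" "q < 1" "k < q"
    by (auto simp: q_def)
  have contraction: "infdist z (T z) < q * dist y z"
    if "z \<in> T y" "0 < dist y z" "dist y z \<le> R" for y z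
  proof -
    have "\<eta> (dist y z) / dist y z \<le> k"
      using eta_mono[OF that(2,3)] by (simp add: k_def R_def)
    then have ratio_bound: "\<eta> (dist y z) \<le> k * dist y z"
      using that(2) by (simp add: pos_divide_le_eq)
    have "infdist z (T z) \<le> hausdorff_metric (T y) (T z)"
      using infdist_le_hausdorff_metric[OF that(1)] CB by blast
    also have "\<dots> \<le> \<eta> (dist y z)"
      by (rule contr)
    also have "\<dots> < q * dist y z"
      using ratio_bound mult_strict_right_mono[OF q(3) that(2)] by linarith
    finally show ?thesis .
  qed
  \<comment> \<open>Carry along the defect \<open>infdist y (T y)\<close>: its strict geometric bound is what lets
    each next point be chosen within the same bound.\<close>
  have "\<exists>z. \<forall>n. infdist (z n) (T (z n)) < R * q ^ Suc n
      \<and> z (Suc n) \<in> T (z n) \<and> dist (z n) (z (Suc n)) < R * q ^ Suc n"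
  proof (rule dependent_nat_choice)
    show "\<exists>y. infdist y (T y) < R * q ^ Suc 0"
      using contraction[OF x1] \<open>R > 0\<close> by (auto simp: R_def mult.commute)
  next
    fix y n
    assume "infdist y (T y) < R * q ^ Suc n"
    then obtain z where z: "z \<in> T y" "dist y z < R * q ^ Suc n"
      using CB infdist_less_imp_ex_dist_less by metis
    have "q ^ Suc n \<le> 1"
      using q by (intro power_le_one) auto
    then have "R * q ^ Suc n \<le> R"
      using \<open>R > 0\<close> mult_left_le[of "q ^ Suc n" R] by linarith
    moreover have "0 < dist y z"
      using z(1) fixed_point_free by (metis zero_less_dist_iff)
    ultimately have "infdist z (T z) < q * dist y z"
      using contraction[OF z(1)] z(2) by simp
    also have "\<dots> \<le> q * (R * q ^ Suc n)"
      using z(2) q(1) by (intro mult_left_mono) auto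
    also have "\<dots> = R * q ^ Suc (Suc n)"
      by simp
    finally show "\<exists>z. infdist z (T z) < R * q ^ Suc (Suc n)
        \<and> z \<in> T y \<and> dist y z < R * q ^ Suc n"
      using z by blast
  qed
  then obtain z where z: "\<And>n. z (Suc n) \<in> T (z n) \<and> dist (z n) (z (Suc n)) < R * q ^ Suc n"
    by blast
  show ?thesis
  proof (rule that[OF q(1,2)])
    show "z (Suc n) \<in> T (z n)" for n
      using z by blast
    show "dist (z n) (z (Suc n)) \<le> (R * q) * q ^ n" for n
      using z[of n] by (simp add: mult.assoc)
  qed
qed

theorem mainTheorem3:
  fixes T :: "'a::complete_space \<Rightarrow> 'a set"
    and \<eta> :: "real \<Rightarrow> real"
  assumes CB: "\<And>x. T x \<noteq> {} \<and> closed (T x) \<and> bounded (T x)"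
    and eta_nonneg: "\<And>t. t \<ge> 0 \<Longrightarrow> \<eta> t \<ge> 0"
    and eta_lsc: "lsc_on_nonneg \<eta>"
    and eta_less: "\<And>t. t > 0 \<Longrightarrow> \<eta> t < t"
    and eta_mono: "\<And>s t. 0 < s \<Longrightarrow> s \<le> t \<Longrightarrow> \<eta> s / s \<le> \<eta> t / t"
    and contr: "\<And>x y. hausdorff_metric (T x) (T y) \<le> \<eta> (dist x y)"
  shows "\<exists>v. v \<in> T v"
proof (rule ccontr)
  assume "\<nexists>v. v \<in> T v"
  then have fixed_point_free: "\<And>v. v \<notin> T v"
    by blast
  have bounded_values: "\<And>x. T x \<noteq> {} \<and> bounded (T x)"
    using CB by blast
  obtain q z C where q: "0 \<le> q" "q < 1" and orbit: "\<And>n. z (Suc n) \<in> T (z n)"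
    and steps: "\<And>n. dist (z n) (z (Suc n)) \<le> C * q ^ n"
    using geometric_orbit_if_fixed_point_free[OF bounded_values eta_less eta_mono contr
        fixed_point_free] by blast
  obtain v where lim: "z \<longlonglongrightarrow> v"
    using Cauchy_if_dist_Suc_le_geometric[OF q steps] Cauchy_convergent_iff convergent_def
    by blast
  have nonexpansive: "hausdorff_metric (T x) (T v) \<le> dist x v" if "x \<noteq> v" for x
    using contr[of x v] eta_less[of "dist x v"] that by simp
  have "v \<in> T v"
    using CB by (intro limit_of_orbit_is_fixed_point[OF bounded_values _ nonexpansive orbit lim]) blast
  with fixed_point_free show False
    by simp
qed

end
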